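(* Consider the TEP model described in the context. Let $\rho^1,\dots,\rho^m$, $m>1$, be directed paths of buses, each consisting of consecutive bus pairs that form established corridors, such that all paths have the same starting bus and the same ending bus, and the intermediate buses of distinct paths are disjoint: writing $\rho^r=(i^r_0,i^r_1),\dots,(i^r_{L_r-1},i^r_{L_r})$, we have $i^r_0=i^{r'}_0$, $i^r_{L_r}=i^{r'}_{L_{r'}}$ and $\{i^r_t\}_{t=1}^{L_r-1}\cap\{i^{r'}_t\}_{t=1}^{L_{r'}-1}=\emptyset$ for $r\ne r'$. For each path $\rho^r$ and each $t$, fix an existing-line index $k^r_t\in\{1,\dots,\omega^0_{i^r_{t-1}i^r_t}\}$, and define $$\pi^r_0=\sum_{t=1}^{L_r}x_{i^r_{t-1}i^r_t,k^r_t}\,\overline P^0_{i^r_{t-1}i^r_t,k^r_t},\qquad \pi^r_t=\operatorname{sgn}(i^r_{t-1}-i^r_t)\,x_{i^r_{t-1}i^r_t,k^r_t}\ (t=1,\dots,L_r).$$ Then for every $r=1,\dots,m$ the two-sided inequality $$-\min\{\pi^n_0\}_{n=1}^m\;\le\;\sum_{t=1}^{L_r}\pi^r_t\,\tilde P^0_{i^r_{t-1}i^r_t,k^r_t}\;\le\;\min\{\pi^n_0\}_{n=1}^m$$ is valid for TEP (satisfied by every feasible solution), for any such choices of line indices.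
   Context: TEP model (DC-power-flow transmission expansion planning, disjunctive MILP). $B$ is a finite set of buses (integers); $\Omega$ is a set of corridors $(i,j)$ of buses, stored with $i<j$. Corridor $(i,j)$ has $\omega^0_{ij}\ge 0$ existing lines and $\bar\omega_{ij}\ge0$ candidate lines. Corridor $(i,j)$ is *established* if $\omega^0_{ij}>0$ and an *expansion corridor* if $\omega^0_{ij}=0$. Line $k$ of corridor $(i,j)$ has susceptance $b_{ij,k}$ and reactance $x_{ij,k}=-1/b_{ij,k}$; existing lines have capacity $\overline P^0_{ij,k}$, candidate lines capacity $\overline P_{ij,k}$. Further parameters: demands $d_n$, generation limits $\overline g_n$, angle limit $\overline\theta$, big-M constants $M_{ij}$, costs. Variables: binary $y_{ij,k}$, flows $P^0_{ij,k}$ (existing lines) and $P_{ij,k}$ (candidate lines), generation $g_n\ge0$, bus angles $\theta_n$ (free). Constraints: for each bus $n$, $\sum_{(n,i)\in\Omega}\big(\sum_k P^0_{ni,k}+\sum_k P_{ni,k}\big)-\sum_{(i,n)\in\Omega}\big(\sum_k P^0_{in,k}+\sum_k P_{in,k}\big)+g_n=d_n$; $-\overline P^0_{ij,k}\le P^0_{ij,k}\le \overline P^0_{ij,k}$; $-\overline P_{ij,k}y_{ij,k}\le P_{ij,k}\le\overline P_{ij,k}y_{ij,k}$; $x_{ij,k}P^0_{ij,k}-(\theta_i-\theta_j)=0$ for existing lines; $-M_{ij}(1-y_{ij,k})\le x_{ij,k}P_{ij,k}-(\theta_i-\theta_j)\le M_{ij}(1-y_{ij,k})$ for candidate lines; $g_n\le\overline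 g_n$; $-\overline\theta\le\theta_i-\theta_j\le\overline\theta$ for $(i,j)\in\Omega$; $y_{ij,k}\in\{0,1\}$. An inequality is *valid for TEP* if every feasible point of this model satisfies it. Notation along paths: for a bus pair traversed as $(i,j)$ with $i>j$ (stored corridor $(j,i)$), set $x_{ij,k}=x_{ji,k}$, $\overline P^0_{ij,k}=\overline P^0_{ji,k}$ and $P^0_{ij,k}=-P^0_{ji,k}$. $\operatorname{sgn}(a)=1$ if $a>0$, $-1$ if $a<0$. Define $\tilde P^0_{ij,k}=\operatorname{sgn}(j-i)\,P^0_{ij,k}$. *)

theory Defs
  imports Complex_Main
begin

text \<open>Data of a TEP instance.  Buses are integers; corridors are stored as
  pairs (i,j) with i < j.  Existing lines of corridor e are indexed 1..w0 e,
  candidate lines 1..wc e.\<close>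

record tep_data =
  buses     :: "int set"
  corridors :: "(int \<times> int) set"
  w0        :: "int \<times> int \<Rightarrow> nat"
  wc        :: "int \<times> int \<Rightarrow> nat"
  susc0     :: "int \<times> int \<Rightarrow> nat \<Rightarrow> real"
  susc      :: "int \<times> int \<Rightarrow> nat \<Rightarrow> real"
  cap0      :: "int \<times> int \<Rightarrow> nat \<Rightarrow> real"
  cap       :: "int \<times> int \<Rightarrow> nat \<Rightarrow> real"
  demand    :: "int \<Rightarrow> real"
  gmax      :: "int \<Rightarrow> real"
  thmax     :: real
  bigM      :: "int \<times> int \<Rightarrow> real"

definition react0 :: "tep_data \<Rightarrow> int \<times> int \<Rightarrow> nat \<Rightarrow> real" where
  "react0 D e k = - 1 / susc0 D e k"
definition react :: "tep_data \<Rightarrow> int \<times> int \<Rightarrow> nat \<Rightarrow> real" where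
  "react D e k = - 1 / susc D e k"

definition tep_wf :: "tep_data \<Rightarrow> bool" where
  "tep_wf D \<longleftrightarrow> finite (buses D) \<and> corridors D \<subseteq> buses D \<times> buses D
     \<and> (\<forall>(i,j)\<in>corridors D. i < j)"

definition corr_flow :: "tep_data \<Rightarrow> (int \<times> int \<Rightarrow> nat \<Rightarrow> real) \<Rightarrow> (int \<times> int \<Rightarrow> nat \<Rightarrow> real)
    \<Rightarrow> int \<times> int \<Rightarrow> real" where
  "corr_flow D P0 P e = (\<Sum>k=1..w0 D e. P0 e k) + (\<Sum>k=1..wc D e. P e k)"

definition tep_feasible :: "tep_data \<Rightarrow> (int \<times> int \<Rightarrow> nat \<Rightarrow> real) \<Rightarrow> (int \<times> int \<Rightarrow> nat \<Rightarrow> real)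
    \<Rightarrow> (int \<times> int \<Rightarrow> nat \<Rightarrow> real) \<Rightarrow> (int \<Rightarrow> real) \<Rightarrow> (int \<Rightarrow> real) \<Rightarrow> bool" where
  "tep_feasible D y P0 P g \<theta> \<longleftrightarrow>
     (\<forall>n\<in>buses D.
        (\<Sum>e\<in>{e\<in>corridors D. fst e = n}. corr_flow D P0 P e)
      - (\<Sum>e\<in>{e\<in>corridors D. snd e = n}. corr_flow D P0 P e) + g n = demand D n)
   \<and> (\<forall>(i,j)\<in>corridors D. \<forall>k\<in>{1..w0 D (i,j)}.
        - cap0 D (i,j) k \<le> P0 (i,j) k \<and> P0 (i,j) k \<le> cap0 D (i,j) k
      \<and> react0 D (i,j) k * P0 (i,j) k - (\<theta> i - \<theta> j) = 0)
   \<and> (\<forall>(i,j)\<in>corridors D. \<forall>k\<in>{1..wc D (i,j)}.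
        y (i,j) k \<in> {0,1}
      \<and> - cap D (i,j) k * y (i,j) k \<le> P (i,j) k \<and> P (i,j) k \<le> cap D (i,j) k * y (i,j) k
      \<and> - bigM D (i,j) * (1 - y (i,j) k) \<le> react D (i,j) k * P (i,j) k - (\<theta> i - \<theta> j)
      \<and> react D (i,j) k * P (i,j) k - (\<theta> i - \<theta> j) \<le> bigM D (i,j) * (1 - y (i,j) k))
   \<and> (\<forall>n\<in>buses D. 0 \<le> g n \<and> g n \<le> gmax D n)
   \<and> (\<forall>(i,j)\<in>corridors D. - thmax D \<le> \<theta> i - \<theta> j \<and> \<theta> i - \<theta> j \<le> thmax D)"

definition corr :: "int \<Rightarrow> int \<Rightarrow> int \<times> int" where
  "corr i j = (min i j, max i j)"

definition xo :: "tep_data \<Rightarrow> int \<Rightarrow> int \<Rightarrow> nat \<Rightarrow> real" where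
  "xo D i j k = react0 D (corr i j) k"
definition capo :: "tep_data \<Rightarrow> int \<Rightarrow> int \<Rightarrow> nat \<Rightarrow> real" where
  "capo D i j k = cap0 D (corr i j) k"
definition P0o :: "(int \<times> int \<Rightarrow> nat \<Rightarrow> real) \<Rightarrow> int \<Rightarrow> int \<Rightarrow> nat \<Rightarrow> real" where
  "P0o P0 i j k = (if i < j then P0 (i,j) k else - P0 (j,i) k)"
definition P0tilde :: "(int \<times> int \<Rightarrow> nat \<Rightarrow> real) \<Rightarrow> int \<Rightarrow> int \<Rightarrow> nat \<Rightarrow> real" where
  "P0tilde P0 i j k = sgn (real_of_int (j - i)) * P0o P0 i j k"

text \<open>A path is a list of buses [i_0, ..., i_L]; L = length - 1;
  bus pair t (t = 1..L) is (i_{t-1}, i_t).  ks t is the chosen existing line.\<close>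
definition pi0 :: "tep_data \<Rightarrow> int list \<Rightarrow> (nat \<Rightarrow> nat) \<Rightarrow> real" where
  "pi0 D p ks = (\<Sum>t=1..length p - 1. xo D (p!(t-1)) (p!t) (ks t) * capo D (p!(t-1)) (p!t) (ks t))"
definition pit :: "tep_data \<Rightarrow> int list \<Rightarrow> (nat \<Rightarrow> nat) \<Rightarrow> nat \<Rightarrow> real" where
  "pit D p ks t = sgn (real_of_int (p!(t-1) - p!t)) * xo D (p!(t-1)) (p!t) (ks t)"

definition established_path :: "tep_data \<Rightarrow> int list \<Rightarrow> bool" where
  "established_path D p \<longleftrightarrow> length p \<ge> 2 \<and> distinct p \<and>
     (\<forall>t\<in>{1..length p - 1}. corr (p!(t-1)) (p!t) \<in> corridors D \<and> w0 D (corr (p!(t-1)) (p!t)) > 0)"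

definition interior :: "int list \<Rightarrow> int set" where
  "interior p = {p!t | t. 1 \<le> t \<and> t \<le> length p - 2}"

end

theory Submission
  imports Defs
begin

text \<open>By Ohm's law on existing lines, each term \<open>\<pi>\<^sub>t P\<^sup>0\<close> of the sum along a path equals
  the angle difference across its bus pair, so the sum telescopes to
  \<open>\<theta>(end) - \<theta>(start)\<close>, the same value for all paths. The capacity bounds show that
  this difference is at most \<open>\<pi>\<^sup>n\<^sub>0\<close> in absolute value for every path \<open>n\<close>, hence at most
  their minimum.\<close>

lemma sgn_diff_mult_sgn_swapped_diff:
  "a \<noteq> b \<Longrightarrow> sgn (real_of_int (a - b)) * sgn (real_of_int (b - a)) = -1"
  by (cases "a < b") (auto simp: sgn_if)

lemma existing_line_oriented:
  assumes feas: "tep_feasible D y P0 P g \<theta>"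
    and corridor: "corr i j \<in> corridors D"
    and k: "k \<in> {1..w0 D (corr i j)}"
  shows "xo D i j k * P0o P0 i j k = \<theta> i - \<theta> j"
    and "\<bar>P0o P0 i j k\<bar> \<le> capo D i j k"
proof -
  have line: "\<And>a b. (a, b) \<in> corridors D \<Longrightarrow> k \<in> {1..w0 D (a, b)} \<Longrightarrow>
      \<bar>P0 (a, b) k\<bar> \<le> cap0 D (a, b) k \<and> react0 D (a, b) k * P0 (a, b) k = \<theta> a - \<theta> b"
    using feas unfolding tep_feasible_def by fastforce
  have "xo D i j k * P0o P0 i j k = \<theta> i - \<theta> j \<and> \<bar>P0o P0 i j k\<bar> \<le> capo D i j k"
  proof (cases "i < j")
    case True
    then have "corr i j = (i, j)" by (simp add: corr_def)
    with line[of i j] corridor k True show ?thesis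
      by (simp add: xo_def capo_def P0o_def)
  next
    case False
    then have "corr i j = (j, i)" by (simp add: corr_def)
    with line[of j i] corridor k False show ?thesis
      by (simp add: xo_def capo_def P0o_def)
  qed
  then show "xo D i j k * P0o P0 i j k = \<theta> i - \<theta> j" "\<bar>P0o P0 i j k\<bar> \<le> capo D i j k"
    by auto
qed

lemma existing_line_path_term:
  assumes feas: "tep_feasible D y P0 P g \<theta>"
    and corridor: "corr i j \<in> corridors D" and "i \<noteq> j"
    and k: "k \<in> {1..w0 D (corr i j)}"
  shows "sgn (real_of_int (i - j)) * xo D i j k * P0tilde P0 i j k = \<theta> j - \<theta> i"
proof -
  have "sgn (real_of_int (i - j)) * xo D i j k * P0tilde P0 i j k
      = sgn (real_of_int (i - j)) * sgn (real_of_int (j - i)) * (xo D i j k * P0o P0 i j k)"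
    by (simp add: P0tilde_def ac_simps)
  also have "\<dots> = \<theta> j - \<theta> i"
    using sgn_diff_mult_sgn_swapped_diff[OF \<open>i \<noteq> j\<close>] existing_line_oriented(1)[OF feas corridor k]
    by simp
  finally show ?thesis .
qed

lemma existing_line_angle_bound:
  assumes feas: "tep_feasible D y P0 P g \<theta>"
    and corridor: "corr i j \<in> corridors D"
    and k: "k \<in> {1..w0 D (corr i j)}"
    and susc_neg: "susc0 D (corr i j) k < 0"
  shows "\<bar>\<theta> i - \<theta> j\<bar> \<le> xo D i j k * capo D i j k"
proof -
  have x_pos: "xo D i j k > 0"
    using susc_neg by (simp add: xo_def react0_def neg_divide_less_eq)
  have "\<bar>\<theta> i - \<theta> j\<bar> = xo D i j k * \<bar>P0o P0 i j k\<bar>"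
    using existing_line_oriented(1)[OF feas corridor k] x_pos by (metis abs_mult abs_of_pos)
  also have "\<dots> \<le> xo D i j k * capo D i j k"
    using existing_line_oriented(2)[OF feas corridor k] x_pos by (simp add: mult_left_mono)
  finally show ?thesis .
qed

lemma established_path_step:
  assumes "established_path D p" and "t \<in> {1..length p - 1}"
  shows "corr (p ! (t - 1)) (p ! t) \<in> corridors D" and "p ! (t - 1) \<noteq> p ! t"
  using assms by (auto simp: established_path_def nth_eq_iff_index_eq)

lemma established_path_telescope:
  assumes "established_path D p"
  shows "(\<Sum>t=1..length p - 1. f (p ! t) - f (p ! (t - 1))) = f (last p) - (f (hd p) :: real)"
proof -
  have "p \<noteq> []" using assms by (auto simp: established_path_def)
  then show ?thesis
    using sum_telescope''[of 0 "length p - 1" "\<lambda>t. f (p ! t)"]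
    by (simp add: hd_conv_nth last_conv_nth)
qed

lemma established_path_sum_eq_angle_diff:
  assumes feas: "tep_feasible D y P0 P g \<theta>"
    and path: "established_path D p"
    and ks: "\<forall>t\<in>{1..length p - 1}. 1 \<le> ks t \<and> ks t \<le> w0 D (corr (p ! (t - 1)) (p ! t))"
  shows "(\<Sum>t=1..length p - 1. pit D p ks t * P0tilde P0 (p ! (t - 1)) (p ! t) (ks t))
           = \<theta> (last p) - \<theta> (hd p)"
proof -
  have "(\<Sum>t=1..length p - 1. pit D p ks t * P0tilde P0 (p ! (t - 1)) (p ! t) (ks t))
      = (\<Sum>t=1..length p - 1. \<theta> (p ! t) - \<theta> (p ! (t - 1)))"
    unfolding pit_def
    using existing_line_path_term[OF feas established_path_step[OF path]] ks
    by (intro sum.cong) auto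
  also have "\<dots> = \<theta> (last p) - \<theta> (hd p)"
    by (rule established_path_telescope[OF path])
  finally show ?thesis .
qed

lemma established_path_angle_bound:
  assumes feas: "tep_feasible D y P0 P g \<theta>"
    and susc_neg: "\<forall>e k. susc0 D e k < 0"
    and path: "established_path D p"
    and ks: "\<forall>t\<in>{1..length p - 1}. 1 \<le> ks t \<and> ks t \<le> w0 D (corr (p ! (t - 1)) (p ! t))"
  shows "\<bar>\<theta> (last p) - \<theta> (hd p)\<bar> \<le> pi0 D p ks"
proof -
  have "\<bar>\<theta> (last p) - \<theta> (hd p)\<bar> = \<bar>\<Sum>t=1..length p - 1. \<theta> (p ! (t - 1)) - \<theta> (p ! t)\<bar>"
    using established_path_telescope[OF path, of "\<lambda>i. - \<theta> i"] by simp
  also have "\<dots> \<le> (\<Sum>t=1..length p - 1. \<bar>\<theta> (p ! (t - 1)) - \<theta> (p ! t)\<bar>)"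
    by (rule sum_abs)
  also have "\<dots> \<le> pi0 D p ks"
    unfolding pi0_def
    using existing_line_angle_bound[OF feas established_path_step(1)[OF path]] ks susc_neg
    by (intro sum_mono) auto
  finally show ?thesis .
qed

theorem lemma2:
  fixes D :: tep_data and m :: nat
    and paths :: "nat \<Rightarrow> int list"
    and ks :: "nat \<Rightarrow> nat \<Rightarrow> nat"
  assumes wf: "tep_wf D"
    and reactance_pos: "\<forall>e k. susc0 D e k < 0"
    and m_gt: "m > 1"
    and paths_est: "\<forall>r<m. established_path D (paths r)"
    and same_start: "\<forall>r<m. \<forall>r'<m. hd (paths r) = hd (paths r')"
    and same_end: "\<forall>r<m. \<forall>r'<m. last (paths r) = last (paths r')"
    and disj: "\<forall>r<m. \<forall>r'<m. r \<noteq> r' \<longrightarrow> interior (paths r) \<inter> interior (paths r') = {}"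
    and ks_ok: "\<forall>r<m. \<forall>t\<in>{1..length (paths r) - 1}.
                   1 \<le> ks r t \<and> ks r t \<le> w0 D (corr (paths r ! (t-1)) (paths r ! t))"
  shows "\<forall>y P0 P g \<theta>. tep_feasible D y P0 P g \<theta> \<longrightarrow>
           (\<forall>r<m.
              - Min ((\<lambda>n. pi0 D (paths n) (ks n)) ` {..<m})
                \<le> (\<Sum>t=1..length (paths r) - 1.
                      pit D (paths r) (ks r) t
                      * P0tilde P0 (paths r ! (t-1)) (paths r ! t) (ks r t))
            \<and> (\<Sum>t=1..length (paths r) - 1.
                      pit D (paths r) (ks r) t
                      * P0tilde P0 (paths r ! (t-1)) (paths r ! t) (ks r t))
                \<le> Min ((\<lambda>n. pi0 D (paths n) (ks n)) ` {..<m}))"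
proof (intro allI impI)
  fix y P0 P g \<theta> r
  assume feas: "tep_feasible D y P0 P g \<theta>" and r: "r < m"
  have sum_eq: "(\<Sum>t=1..length (paths r) - 1.
      pit D (paths r) (ks r) t * P0tilde P0 (paths r ! (t-1)) (paths r ! t) (ks r t))
      = \<theta> (last (paths r)) - \<theta> (hd (paths r))"
    using established_path_sum_eq_angle_diff[OF feas] paths_est ks_ok r by blast
  have "\<bar>\<theta> (last (paths r)) - \<theta> (hd (paths r))\<bar> \<le> pi0 D (paths n) (ks n)" if n: "n < m" for n
  proof -
    have "hd (paths n) = hd (paths r)" and "last (paths n) = last (paths r)"
      using same_start same_end n r by blast+
    then show ?thesis
      using established_path_angle_bound[OF feas reactance_pos] paths_est ks_ok n by metis
  qed
  then have "\<bar>\<theta> (last (paths r)) - \<theta> (hd (paths r))\<bar> \<le> Min ((\<lambda>n. pi0 D (paths n) (ks n)) ` {..<m})"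
    using r by (subst Min_ge_iff) auto
  then show "- Min ((\<lambda>n. pi0 D (paths n) (ks n)) ` {..<m})
      \<le> (\<Sum>t=1..length (paths r) - 1.
          pit D (paths r) (ks r) t * P0tilde P0 (paths r ! (t-1)) (paths r ! t) (ks r t))
    \<and> (\<Sum>t=1..length (paths r) - 1.
          pit D (paths r) (ks r) t * P0tilde P0 (paths r ! (t-1)) (paths r ! t) (ks r t))
      \<le> Min ((\<lambda>n. pi0 D (paths n) (ks n)) ` {..<m})"
    unfolding sum_eq by linarith
qed

end
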